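(* Let $\mathcal{K}$ be a Hilbert space, let $A$ be a closable, densely defined operator in $\mathcal{K}$, let $A_0$ be an operator with $A_0\subseteq A^*$, and let $(T_n)_{n=0}^\infty\subseteq\mathbf{B}(\mathcal{K})$ be a sequence converging to $I_\mathcal{K}$ in the weak operator topology such that for every $n$: (f1) the commutator $\mathrm{ad}(T_n,\bar A)=T_n\bar A-\bar AT_n$ is densely defined and bounded in $\mathcal{K}$; and (f2) $T_n^*\mathcal{D}(A^* )\subseteq\mathcal{D}(\bar A_0)$. Then the following conditions are equivalent: (1) $\sup_{n\in\mathbb{N}}\|\mathrm{ad}(T_n,\bar A)\|<+\infty$; (2) $\sup_{n\in\mathbb{N}}\|\overline{\mathrm{ad}(T_n^*,A^* )}\|<+\infty$; (3) $\overline{\mathrm{ad}(T_n,\bar A)}\to 0$ in the weak operator topology as $n\to\infty$; (4) $\overline{\mathrm{ad}(T_n^*,A^* )}\to 0$ in the weak operator topology as $n\to\infty$.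
   Context: $\mathbf{B}(\mathcal{K})$ denotes the space of all bounded linear operators defined on all of $\mathcal{K}$. For operators $S,T$, $\mathrm{ad}(S,T):=ST-TS$, with sums and products of unbounded operators taken on their natural domains. $\bar S$ denotes the closure of a closable operator $S$; $\mathcal{D}(S)$ its domain. An operator $S$ is called bounded if $\|Sf\|\le c\|f\|$ for all $f\in\mathcal{D}(S)$ and some $c\ge0$, and $\|S\|$ is the supremum of $\|Sf\|$ over $f\in\mathcal{D}(S)$, $\|f\|\le1$. *)

theory Defs
  imports "HOL-Analysis.Analysis"
begin

class complex_vector = real_vector +
  fixes scaleC :: "complex \<Rightarrow> 'a \<Rightarrow> 'a"
  assumes scaleC_add_right: "scaleC a (x + y) = scaleC a x + scaleC a y"
    and scaleC_add_left: "scaleC (a + b) x = scaleC a x + scaleC b x"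
    and scaleC_scaleC: "scaleC a (scaleC b x) = scaleC (a * b) x"
    and scaleC_one: "scaleC 1 x = x"
    and scaleR_scaleC: "scaleR r x = scaleC (complex_of_real r) x"

class complex_inner = complex_vector + real_normed_vector +
  fixes cinner :: "'a \<Rightarrow> 'a \<Rightarrow> complex"
  assumes cinner_commute: "cinner x y = cnj (cinner y x)"
    and cinner_add_left: "cinner (x + y) z = cinner x z + cinner y z"
    and cinner_scaleC_left: "cinner (scaleC r x) y = cnj r * cinner x y"
    and cinner_real: "Im (cinner x x) = 0"
    and cinner_ge_zero: "0 \<le> Re (cinner x x)"
    and cinner_eq_zero_iff: "cinner x x = 0 \<longleftrightarrow> x = 0"
    and norm_eq_sqrt_cinner: "norm x = sqrt (Re (cinner x x))"

class chilbert = complex_inner + complete_space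

text \<open>An operator is a pair (domain, action); only values on the domain matter.\<close>
type_synonym 'a op = "'a set \<times> ('a \<Rightarrow> 'a)"

definition op_dom :: "'a op \<Rightarrow> 'a set" where "op_dom S = fst S"
definition app :: "'a op \<Rightarrow> 'a \<Rightarrow> 'a" where "app S = snd S"

definition csubspace :: "'a::complex_vector set \<Rightarrow> bool" where
  "csubspace D \<longleftrightarrow> 0 \<in> D \<and> (\<forall>x\<in>D. \<forall>y\<in>D. x + y \<in> D) \<and> (\<forall>c. \<forall>x\<in>D. scaleC c x \<in> D)"

definition linear_op :: "'a::complex_vector op \<Rightarrow> bool" where
  "linear_op S \<longleftrightarrow> csubspace (op_dom S) \<and>
     (\<forall>x\<in>op_dom S. \<forall>y\<in>op_dom S. app S (x + y) = app S x + app S y) \<and>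
     (\<forall>c. \<forall>x\<in>op_dom S. app S (scaleC c x) = scaleC c (app S x))"

definition graph :: "'a op \<Rightarrow> ('a \<times> 'a) set" where
  "graph S = {(x, app S x) | x. x \<in> op_dom S}"

definition densely_defined :: "'a::topological_space op \<Rightarrow> bool" where
  "densely_defined S \<longleftrightarrow> closure (op_dom S) = UNIV"

definition closable :: "'a::real_normed_vector op \<Rightarrow> bool" where
  "closable S \<longleftrightarrow> (\<forall>y. (0, y) \<in> closure (graph S) \<longrightarrow> y = 0)"

definition op_closure :: "'a::real_normed_vector op \<Rightarrow> 'a op" where
  "op_closure S = ({x. \<exists>y. (x, y) \<in> closure (graph S)},
                   \<lambda>x. THE y. (x, y) \<in> closure (graph S))"

definition op_adjoint :: "'a::complex_inner op \<Rightarrow> 'a op" where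
  "op_adjoint S = ({y. \<exists>z. \<forall>x\<in>op_dom S. cinner (app S x) y = cinner x z},
                   \<lambda>y. THE z. \<forall>x\<in>op_dom S. cinner (app S x) y = cinner x z)"

definition op_subset :: "'a op \<Rightarrow> 'a op \<Rightarrow> bool" where
  "op_subset S T \<longleftrightarrow> op_dom S \<subseteq> op_dom T \<and> (\<forall>x\<in>op_dom S. app S x = app T x)"

definition op_mult :: "'a op \<Rightarrow> 'a op \<Rightarrow> 'a op" where
  "op_mult S T = ({x \<in> op_dom T. app T x \<in> op_dom S}, \<lambda>x. app S (app T x))"

definition op_minus :: "'a::minus op \<Rightarrow> 'a op \<Rightarrow> 'a op" where
  "op_minus S T = (op_dom S \<inter> op_dom T, \<lambda>x. app S x - app T x)"

definition ad :: "'a::minus op \<Rightarrow> 'a op \<Rightarrow> 'a op" where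
  "ad S T = op_minus (op_mult S T) (op_mult T S)"

definition bounded_op :: "'a::real_normed_vector op \<Rightarrow> bool" where
  "bounded_op S \<longleftrightarrow> (\<exists>c\<ge>0. \<forall>f\<in>op_dom S. norm (app S f) \<le> c * norm f)"

definition op_norm :: "'a::real_normed_vector op \<Rightarrow> ereal" where
  "op_norm S = (SUP f\<in>{f \<in> op_dom S. norm f \<le> 1}. ereal (norm (app S f)))"

definition bounded_clinear :: "('a::complex_inner \<Rightarrow> 'a) \<Rightarrow> bool" where
  "bounded_clinear T \<longleftrightarrow> (\<forall>x y. T (x + y) = T x + T y) \<and> (\<forall>c x. T (scaleC c x) = scaleC c (T x))
      \<and> (\<exists>K. \<forall>x. norm (T x) \<le> norm x * K)"

definition bop :: "('a \<Rightarrow> 'a) \<Rightarrow> 'a op" where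
  "bop T = (UNIV, T)"

definition wot_tendsto :: "(nat \<Rightarrow> 'a::complex_inner \<Rightarrow> 'a) \<Rightarrow> ('a \<Rightarrow> 'a) \<Rightarrow> bool" where
  "wot_tendsto T L \<longleftrightarrow> (\<forall>x y. (\<lambda>n. cinner x (T n y)) \<longlonglongrightarrow> cinner x (L y))"

definition op_wot_tendsto_zero :: "(nat \<Rightarrow> 'a::complex_inner op) \<Rightarrow> bool" where
  "op_wot_tendsto_zero S \<longleftrightarrow> (\<forall>n. op_dom (S n) = UNIV \<and> bounded_clinear (app (S n)))
      \<and> wot_tendsto (\<lambda>n. app (S n)) (\<lambda>_. 0)"

end

theory Submission
  imports Defs
begin

text \<open>
  Write \<open>B\<^sub>n = ad(T\<^sub>n, cl A)\<close> and \<open>C\<^sub>n = ad(T\<^sub>n\<^sup>*, A\<^sup>*)\<close>. Since \<open>A\<close> is closable, \<open>A\<^sup>*\<close> is densely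
  defined, and by (f2) \<open>T\<^sub>n\<^sup>*\<close> maps \<open>D(A\<^sup>*)\<close> into itself; a direct computation then gives
  \<open>\<langle>B\<^sub>n x, y\<rangle> = - \<langle>x, C\<^sub>n y\<rangle>\<close> for \<open>x \<in> D(B\<^sub>n)\<close>, \<open>y \<in> D(A\<^sup>*)\<close>. Together with (f1) this makes the
  closures of \<open>B\<^sub>n\<close> and \<open>C\<^sub>n\<close> everywhere defined bounded operators with
  \<open>cl C\<^sub>n = - (cl B\<^sub>n)\<^sup>*\<close>, whence (1) \<open>\<longleftrightarrow>\<close> (2) and (3) \<open>\<longleftrightarrow>\<close> (4).

  For \<open>x \<in> D(cl A)\<close> and \<open>y \<in> D(A\<^sup>*)\<close> one has
  \<open>\<langle>x, C\<^sub>n y\<rangle> = \<langle>T\<^sub>n x, A\<^sup>* y\<rangle> - \<langle>T\<^sub>n (cl A) x, y\<rangle> \<longrightarrow> \<langle>x, A\<^sup>* y\<rangle> - \<langle>(cl A) x, y\<rangle> = 0\<close>, so a uniform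
  bound on the \<open>C\<^sub>n\<close> gives (4) by equicontinuity, both domains being dense. Conversely a
  weakly null sequence of bounded operators is uniformly bounded, by the uniform boundedness
  principle applied twice.
\<close>

section \<open>Complex inner product spaces\<close>

context complex_inner
begin

lemma cinner_zero_left [simp]: "cinner 0 y = 0"
  using cinner_add_left[of 0 0 y] by simp

lemma cnj_cinner [simp]: "cnj (cinner x y) = cinner y x"
  by (simp add: cinner_commute[of y x])

lemma cinner_add_right: "cinner x (y + z) = cinner x y + cinner x z"
  by (metis cinner_commute cinner_add_left complex_cnj_add)

lemma cinner_zero_right [simp]: "cinner x 0 = 0"
  by (metis cinner_commute cinner_zero_left complex_cnj_zero)

lemma cinner_scaleC_right: "cinner x (scaleC r y) = r * cinner x y"
  by (metis cinner_commute cinner_scaleC_left complex_cnj_cnj complex_cnj_mult)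

lemma cinner_minus_left: "cinner (- x) y = - cinner x y"
  using cinner_add_left[of x "- x" y] by simp algebra

lemma cinner_minus_right: "cinner x (- y) = - cinner x y"
  using cinner_add_right[of x y "- y"] by simp algebra

lemma cinner_diff_left: "cinner (x - y) z = cinner x z - cinner y z"
  using cinner_add_left[of x "- y" z] by (simp add: cinner_minus_left)

lemma cinner_diff_right: "cinner x (y - z) = cinner x y - cinner x z"
  using cinner_add_right[of x y "- z"] by (simp add: cinner_minus_right)

lemma cinner_scaleR_left: "cinner (scaleR r x) y = of_real r * cinner x y"
  by (simp add: scaleR_scaleC cinner_scaleC_left)

lemma cinner_scaleR_right: "cinner x (scaleR r y) = of_real r * cinner x y"
  by (simp add: scaleR_scaleC cinner_scaleC_right)

lemma cinner_self: "cinner x x = of_real ((norm x)\<^sup>2)"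
  using cinner_real[of x] cinner_ge_zero[of x] norm_eq_sqrt_cinner[of x]
  by (simp add: complex_eq_iff)

lemma Re_cinner_commute: "Re (cinner y x) = Re (cinner x y)"
  by (simp add: cinner_commute[of y x] del: cnj_cinner)

lemma Re_cinner_self: "Re (cinner x x) = (norm x)\<^sup>2"
  by (simp add: cinner_self)

lemma norm_scaleC: "norm (scaleC c x) = cmod c * norm x"
proof -
  have "of_real ((norm (scaleC c x))\<^sup>2) = cinner (scaleC c x) (scaleC c x)"
    by (simp add: cinner_self)
  also have "\<dots> = cnj c * c * cinner x x"
    by (simp add: cinner_scaleC_left cinner_scaleC_right)
  also have "\<dots> = of_real ((cmod c * norm x)\<^sup>2)"
    by (simp add: cinner_self power_mult_distrib mult.commute) (metis of_real_power complex_norm_square)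
  finally have "(norm (scaleC c x))\<^sup>2 = (cmod c * norm x)\<^sup>2"
    using of_real_eq_iff by blast
  then show ?thesis
    by (simp add: power2_eq_iff_nonneg)
qed

lemma power2_norm_add: "(norm (x + y))\<^sup>2 = (norm x)\<^sup>2 + 2 * Re (cinner x y) + (norm y)\<^sup>2"
proof -
  have "(norm (x + y))\<^sup>2 = Re (cinner x x) + Re (cinner x y) + Re (cinner y x) + Re (cinner y y)"
    by (simp add: Re_cinner_self[symmetric] cinner_add_left cinner_add_right)
  also have "Re (cinner y x) = Re (cinner x y)"
    by (rule Re_cinner_commute)
  finally show ?thesis
    by (simp add: Re_cinner_self)
qed

lemma Re_cinner_le: "Re (cinner x y) \<le> norm x * norm y"
proof (cases "x = 0 \<or> y = 0")
  case False
  then have pos: "norm x * norm y > 0"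
    by simp
  define u where "u = scaleR (norm y) x - scaleR (norm x) y"
  have "Re (cinner y x) = Re (cinner x y)"
    by (rule Re_cinner_commute)
  then have "Re (cinner u u) = 2 * (norm x)\<^sup>2 * (norm y)\<^sup>2 - 2 * norm x * norm y * Re (cinner x y)"
    unfolding u_def
    by (simp add: cinner_diff_left cinner_diff_right cinner_scaleR_left cinner_scaleR_right
        Re_cinner_self power2_eq_square algebra_simps)
  moreover have "0 \<le> Re (cinner u u)"
    by (rule cinner_ge_zero)
  ultimately have "norm x * norm y * Re (cinner x y) \<le> norm x * norm y * (norm x * norm y)"
    by (simp add: power2_eq_square algebra_simps)
  then show ?thesis
    using pos by (rule mult_le_cancel_left_pos[THEN iffD1, rotated])
qed auto

lemma cinner_Cauchy_Schwarz: "cmod (cinner x y) \<le> norm x * norm y"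
proof (cases "cinner x y = 0")
  case False
  define z where "z = cinner x y"
  define c where "c = z / of_real (cmod z)"
  have "cmod c = 1"
    using False by (simp add: c_def z_def norm_divide)
  have "cnj c * z = of_real ((cmod z)\<^sup>2) / of_real (cmod z)"
    by (simp add: c_def complex_norm_square[of z] mult.commute del: of_real_power)
  also have "\<dots> = of_real (cmod z)"
    using False by (simp add: z_def power2_eq_square)
  finally have "cmod (cinner x y) = Re (cinner (scaleC c x) y)"
    by (simp add: cinner_scaleC_left z_def)
  also have "\<dots> \<le> norm (scaleC c x) * norm y"
    by (rule Re_cinner_le)
  finally show ?thesis
    by (simp add: norm_scaleC \<open>cmod c = 1\<close>)
qed simp

end

lemma bounded_bilinear_cinner: "bounded_bilinear (cinner :: 'a::complex_inner \<Rightarrow> 'a \<Rightarrow> complex)"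
proof
  fix a a' b b' :: 'a and r :: real
  show "cinner (a + a') b = cinner a b + cinner a' b" by (rule cinner_add_left)
  show "cinner a (b + b') = cinner a b + cinner a b'" by (rule cinner_add_right)
  show "cinner (scaleR r a) b = scaleR r (cinner a b)"
    by (simp add: cinner_scaleR_left scaleR_conv_of_real)
  show "cinner a (scaleR r b) = scaleR r (cinner a b)"
    by (simp add: cinner_scaleR_right scaleR_conv_of_real)
  show "\<exists>K. \<forall>(a::'a) b. norm (cinner a b) \<le> norm a * norm b * K"
    by (rule exI[of _ 1]) (simp add: cinner_Cauchy_Schwarz)
qed

lemma tendsto_cinner [tendsto_intros]:
  "(f \<longlongrightarrow> a) F \<Longrightarrow> (g \<longlongrightarrow> b) F \<Longrightarrow> ((\<lambda>x. cinner (f x) (g x)) \<longlongrightarrow> cinner a b) F"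
  by (rule bounded_bilinear.tendsto[OF bounded_bilinear_cinner])

lemma continuous_on_cinner [continuous_intros]:
  fixes f g :: "'b::topological_space \<Rightarrow> 'a::complex_inner"
  shows "continuous_on S f \<Longrightarrow> continuous_on S g \<Longrightarrow> continuous_on S (\<lambda>x. cinner (f x) (g x))"
  unfolding continuous_on_def by (fast intro: tendsto_cinner)

lemma closed_superset_of_dense_eq_UNIV:
  fixes D :: "'a::topological_space set"
  assumes "closure D = UNIV" "closed P" "D \<subseteq> P"
  shows "P = UNIV"
  using closure_minimal[OF assms(3,2)] assms(1) by auto

lemma eq_if_cinner_eq_on_dense:
  fixes u v :: "'a::complex_inner"
  assumes "closure D = UNIV" "\<And>d. d \<in> D \<Longrightarrow> cinner d u = cinner d v"
  shows "u = v"
proof -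
  have "closed {d. cinner d (u - v) = 0}"
    by (intro closed_Collect_eq continuous_intros)
  then have "{d. cinner d (u - v) = 0} = UNIV"
    using closed_superset_of_dense_eq_UNIV[OF assms(1)] assms(2) by (auto simp: cinner_diff_right)
  then show ?thesis
    using cinner_eq_zero_iff[of "u - v"] by auto
qed

lemma eq_if_cinner_left_eq:
  fixes u v :: "'a::complex_inner"
  assumes "\<And>y. cinner u y = cinner v y"
  shows "u = v"
proof (rule eq_if_cinner_eq_on_dense[of UNIV])
  fix y
  show "cinner y u = cinner y v"
    using arg_cong[OF assms[of y], of cnj] by simp
qed simp

lemma norm_le_if_cinner_le_on_dense:
  fixes u :: "'a::complex_inner"
  assumes "closure D = UNIV" and "c \<ge> 0"
    and "\<And>x. x \<in> D \<Longrightarrow> cmod (cinner x u) \<le> c * norm x"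
  shows "norm u \<le> c"
proof -
  have "closed {x. cmod (cinner x u) \<le> c * norm x}"
    by (intro closed_Collect_le continuous_intros)
  then have "cmod (cinner u u) \<le> c * norm u"
    using closed_superset_of_dense_eq_UNIV[OF assms(1)] assms(3) by blast
  then have "(norm u)\<^sup>2 \<le> c * norm u"
    by (simp add: cinner_self norm_power)
  then show ?thesis
    using \<open>c \<ge> 0\<close> by (cases "norm u = 0") (auto simp: power2_eq_square)
qed

lemma norm_le_if_cinner_le_on_dense':
  fixes u :: "'a::complex_inner"
  assumes "closure D = UNIV" and "c \<ge> 0"
    and "\<And>x. x \<in> D \<Longrightarrow> cmod (cinner u x) \<le> c * norm x"
  shows "norm u \<le> c"
proof (rule norm_le_if_cinner_le_on_dense[OF assms(1,2)])
  fix x assume "x \<in> D"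
  then show "cmod (cinner x u) \<le> c * norm x"
    using assms(3) complex_mod_cnj[of "cinner u x"] by simp
qed

section \<open>Orthogonality and the Riesz representation\<close>

lemma csubspace_diff: "csubspace M \<Longrightarrow> x \<in> M \<Longrightarrow> y \<in> M \<Longrightarrow> x - y \<in> M"
  unfolding csubspace_def
  by (metis diff_conv_add_uminus scaleC_one scaleR_minus1_left scaleR_scaleC of_real_1 of_real_minus)

lemma parallelogram_law:
  fixes a b :: "'a::complex_inner"
  shows "(norm (a + b))\<^sup>2 + (norm (a - b))\<^sup>2 = 2 * (norm a)\<^sup>2 + 2 * (norm b)\<^sup>2"
  using power2_norm_add[of a b] power2_norm_add[of a "- b"] by (simp add: cinner_minus_right)

lemma Cauchy_if_norm_diff_tendsto_infdist:
  fixes M :: "'a::complex_inner set"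
  assumes M: "csubspace M" and m: "\<And>k. m k \<in> M"
    and lim: "(\<lambda>k. norm (u - m k)) \<longlonglongrightarrow> infdist u M"
  shows "Cauchy m"
proof (rule CauchyI)
  define d where "d = infdist u M"
  have d_le: "d \<le> norm (u - x)" if "x \<in> M" for x
    using infdist_le[OF that, of u] by (simp add: d_def dist_norm)
  have para: "(norm (m k - m j))\<^sup>2 \<le> 2 * (norm (u - m k))\<^sup>2 + 2 * (norm (u - m j))\<^sup>2 - 4 * d\<^sup>2"
    for k j
  proof -
    have "scaleC (1/2) (m k + m j) \<in> M"
      using M m unfolding csubspace_def by blast
    then have "2 * d \<le> norm (scaleR 2 (u - scaleC (1/2) (m k + m j)))"
      using d_le by simp
    also have "scaleR 2 (u - scaleC (1/2) (m k + m j)) = (u - m k) + (u - m j)"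
    proof -
      have "scaleR 2 (scaleC (1/2) v) = v" for v :: 'a
        by (simp add: scaleR_scaleC scaleC_scaleC scaleC_one)
      then show ?thesis
        by (simp add: scaleR_diff_right scaleR_2 algebra_simps)
    qed
    finally have "(2 * d)\<^sup>2 \<le> (norm ((u - m k) + (u - m j)))\<^sup>2"
      using infdist_nonneg[of u M] by (intro power_mono) (auto simp: d_def)
    then show ?thesis
      using parallelogram_law[of "u - m k" "u - m j"]
      by (simp add: norm_minus_commute power_mult_distrib)
  qed
  fix e :: real assume "0 < e"
  have "(\<lambda>k. (norm (u - m k))\<^sup>2) \<longlonglongrightarrow> d\<^sup>2"
    unfolding d_def by (intro tendsto_intros lim)
  then obtain N where N: "\<And>k. k \<ge> N \<Longrightarrow> (norm (u - m k))\<^sup>2 < d\<^sup>2 + e\<^sup>2 / 4"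
    using order_tendstoD(2)[of _ "d\<^sup>2" sequentially "d\<^sup>2 + e\<^sup>2 / 4"] \<open>0 < e\<close>
    by (auto simp: eventually_sequentially)
  have "(norm (m k - m j))\<^sup>2 < e\<^sup>2" if "N \<le> k" "N \<le> j" for k j
    using para[of k j] N[OF that(1)] N[OF that(2)] by linarith
  then show "\<exists>N. \<forall>k\<ge>N. \<forall>j\<ge>N. norm (m k - m j) < e"
    using \<open>0 < e\<close> by (meson power_less_imp_less_base norm_ge_zero less_imp_le)
qed

lemma cinner_eq_0_if_norm_le_norm_add:
  fixes w c :: "'a::complex_inner"
  assumes "\<And>t. norm w \<le> norm (w + scaleC t c)"
  shows "cinner c w = 0"
proof (cases "c = 0")
  case False
  define n where "n = (norm c)\<^sup>2"
  define a where "a = cinner w c"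
  have "n > 0"
    using False by (simp add: n_def)
  \<comment> \<open>the minimiser of \<open>t \<mapsto> \<parallel>w + t c\<parallel>\<^sup>2\<close>\<close>
  define t where "t = - cnj a / of_real n"
  have "t * a = - of_real ((cmod a)\<^sup>2 / n)"
    by (simp add: t_def complex_norm_square[of a] mult.commute del: of_real_power)
  moreover have "(norm (scaleC t c))\<^sup>2 = (cmod a)\<^sup>2 / n"
  proof -
    have "cmod t = cmod a / n"
      using \<open>n > 0\<close> by (simp add: t_def norm_divide)
    then have "(norm (scaleC t c))\<^sup>2 = (cmod a)\<^sup>2 / n\<^sup>2 * n"
      by (simp add: norm_scaleC power_mult_distrib power_divide n_def[symmetric])
    then show ?thesis
      using \<open>n > 0\<close> by (simp add: power2_eq_square)
  qed
  moreover have "(norm w)\<^sup>2 \<le> (norm (w + scaleC t c))\<^sup>2"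
    using assms[of t] by (intro power_mono) auto
  ultimately have "(cmod a)\<^sup>2 / n \<le> 0"
    by (simp add: power2_norm_add cinner_scaleC_right a_def)
  then have "a = 0"
    using \<open>n > 0\<close> by (simp add: divide_le_0_iff)
  then show ?thesis
    using cnj_cinner[of w c] by (simp add: a_def)
qed simp

lemma infdist_minimizing_sequence:
  fixes M :: "'a::metric_space set"
  assumes "M \<noteq> {}"
  obtains m where "\<And>k. m k \<in> M" and "(\<lambda>k. dist u (m k)) \<longlonglongrightarrow> infdist u M"
proof -
  define d where "d = infdist u M"
  have "\<exists>x\<in>M. dist u x < d + 1 / Suc k" for k
  proof (rule ccontr)
    assume "\<not> ?thesis"
    then have "d + 1 / Suc k \<le> infdist u M"
      unfolding infdist_notempty[OF assms] by (intro cINF_greatest[OF assms]) auto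
    then show False
      by (simp add: d_def)
  qed
  then have "\<forall>k. \<exists>x. x \<in> M \<and> dist u x < d + 1 / Suc k"
    by blast
  then obtain m where "\<forall>k. m k \<in> M \<and> dist u (m k) < d + 1 / Suc k"
    by (metis choice)
  then have m: "\<And>k. m k \<in> M" and m_near: "\<And>k. dist u (m k) < d + 1 / Suc k"
    by auto
  have "(\<lambda>k. dist u (m k)) \<longlonglongrightarrow> d"
  proof (rule tendsto_sandwich[of "\<lambda>_. d" _ _ "\<lambda>k. d + 1 / Suc k"])
    show "\<forall>\<^sub>F k in sequentially. d \<le> dist u (m k)"
      using infdist_le[OF m] by (simp add: d_def)
    show "\<forall>\<^sub>F k in sequentially. dist u (m k) \<le> d + 1 / real (Suc k)"
      using m_near by (intro always_eventually allI less_imp_le)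
    show "(\<lambda>k. d + 1 / real (Suc k)) \<longlonglongrightarrow> d"
      using tendsto_add[OF tendsto_const[of d] LIMSEQ_Suc[OF lim_inverse_n']] by simp
  qed simp
  with m show ?thesis
    by (intro that) (auto simp: d_def)
qed

lemma exists_nearest_point_csubspace:
  fixes M :: "'a::chilbert set"
  assumes M: "csubspace M"
  obtains p where "p \<in> closure M" and "\<And>x. x \<in> M \<Longrightarrow> norm (u - p) \<le> norm (u - p + x)"
proof -
  have "M \<noteq> {}"
    using M by (auto simp: csubspace_def)
  then obtain m where m: "\<And>k. m k \<in> M" and lim: "(\<lambda>k. norm (u - m k)) \<longlonglongrightarrow> infdist u M"
    by (rule infdist_minimizing_sequence) (auto simp: dist_norm)
  then have "Cauchy m"
    by (rule Cauchy_if_norm_diff_tendsto_infdist[OF M])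
  then obtain p where p: "m \<longlonglongrightarrow> p"
    by (auto simp: Cauchy_convergent_iff convergent_def)
  have "(\<lambda>k. norm (u - m k)) \<longlonglongrightarrow> norm (u - p)"
    by (intro tendsto_intros p)
  with lim have dist_p: "norm (u - p) = infdist u M"
    using LIMSEQ_unique by blast
  have "norm (u - p) \<le> norm (u - p + x)" if "x \<in> M" for x
  proof -
    have "infdist u M \<le> norm (u - (m k - x))" for k
      using infdist_le[OF csubspace_diff[OF M m that], of u] by (simp add: dist_norm)
    moreover have "(\<lambda>k. norm (u - (m k - x))) \<longlonglongrightarrow> norm (u - (p - x))"
      by (intro tendsto_intros p)
    ultimately have "infdist u M \<le> norm (u - (p - x))"
      using LIMSEQ_le_const by blast
    then show ?thesis
      by (simp add: dist_p algebra_simps)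
  qed
  moreover have "p \<in> closure M"
    using m p by (auto simp: closure_sequential)
  ultimately show ?thesis
    using that by blast
qed

lemma exists_orthogonal_to_csubspace:
  fixes M :: "'a::chilbert set"
  assumes M: "csubspace M" and u: "u \<notin> closure M"
  obtains w where "\<And>m. m \<in> M \<Longrightarrow> cinner m w = 0" and "cinner w u \<noteq> 0"
proof -
  obtain p where p: "p \<in> closure M" and near: "\<And>x. x \<in> M \<Longrightarrow> norm (u - p) \<le> norm (u - p + x)"
    using exists_nearest_point_csubspace[OF M] by blast
  define w where "w = u - p"
  have orth: "cinner c w = 0" if "c \<in> M" for c
  proof (rule cinner_eq_0_if_norm_le_norm_add)
    show "norm w \<le> norm (w + scaleC t c)" for t
      using near M that unfolding w_def csubspace_def by blast
  qed
  have "closed {q. cinner q w = 0}"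
    by (intro closed_Collect_eq continuous_intros)
  then have "closure M \<subseteq> {q. cinner q w = 0}"
    using orth by (intro closure_minimal) auto
  then have "cinner p w = 0"
    using p by auto
  from arg_cong[OF this, of cnj] have "cinner w p = 0"
    by simp
  then have "cinner w u = cinner w w"
    by (simp add: w_def cinner_diff_right)
  moreover have "w \<noteq> 0"
    using p u by (auto simp: w_def)
  ultimately show ?thesis
    using that[OF orth] cinner_eq_zero_iff by auto
qed

lemma Riesz_representation:
  fixes \<psi> :: "'a::chilbert \<Rightarrow> complex"
  assumes add: "\<And>x y. \<psi> (x + y) = \<psi> x + \<psi> y" and scale: "\<And>c x. \<psi> (scaleC c x) = c * \<psi> x"
    and cont: "continuous_on UNIV \<psi>"
  obtains z where "\<And>x. \<psi> x = cinner z x"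
proof (cases "\<forall>x. \<psi> x = 0")
  case True
  then show ?thesis
    using that[of 0] by simp
next
  case False
  then obtain u where "\<psi> u \<noteq> 0"
    by blast
  define N where "N = {x. \<psi> x = 0}"
  have "\<psi> 0 = 0"
    using add[of 0 0] by simp
  then have "csubspace N"
    unfolding csubspace_def N_def using add scale by auto
  have "closed N"
    unfolding N_def by (intro closed_Collect_eq cont continuous_on_const)
  then have "u \<notin> closure N"
    using \<open>\<psi> u \<noteq> 0\<close> by (simp add: N_def)
  then obtain w where orth: "\<And>m. m \<in> N \<Longrightarrow> cinner m w = 0" and "cinner w u \<noteq> 0"
    using exists_orthogonal_to_csubspace[OF \<open>csubspace N\<close>] by blast
  then have "w \<noteq> 0"
    by auto
  then have "cinner w w \<noteq> 0"
    using cinner_eq_zero_iff by blast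
  have "\<psi> w \<noteq> 0"
    using orth[of w] \<open>w \<noteq> 0\<close> cinner_eq_zero_iff by (auto simp: N_def)
  show ?thesis
  proof (rule that[of "scaleC (cnj (\<psi> w / cinner w w)) w"])
    fix x
    have "\<psi> (x + scaleC (- (\<psi> x / \<psi> w)) w) = 0"
      using \<open>\<psi> w \<noteq> 0\<close> by (simp add: add scale)
    then have "cinner w (x + scaleC (- (\<psi> x / \<psi> w)) w) = 0"
      using arg_cong[OF orth, of _ cnj] by (simp add: N_def)
    then have "cinner w x = \<psi> x / \<psi> w * cinner w w"
      by (simp add: cinner_add_right cinner_scaleC_right)
    then show "\<psi> x = cinner (scaleC (cnj (\<psi> w / cinner w w)) w) x"
      using \<open>\<psi> w \<noteq> 0\<close> \<open>cinner w w \<noteq> 0\<close> by (simp add: cinner_scaleC_left)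
  qed
qed

section \<open>Operators, closures and adjoints\<close>

instantiation prod :: (complex_vector, complex_vector) complex_vector
begin

definition scaleC_prod_def: "scaleC c x = (scaleC c (fst x), scaleC c (snd x))"

instance
  by standard (simp_all add: scaleC_prod_def scaleR_prod_def scaleC_add_right scaleC_add_left
      scaleC_scaleC scaleC_one scaleR_scaleC)

end

instantiation prod :: (complex_inner, complex_inner) complex_inner
begin

definition cinner_prod_def: "cinner x y = cinner (fst x) (fst y) + cinner (snd x) (snd y)"

instance
proof
  fix x y z :: "'a \<times> 'b" and r :: complex
  show "cinner x y = cnj (cinner y x)"
    by (simp add: cinner_prod_def)
  show "cinner (x + y) z = cinner x z + cinner y z"
    by (simp add: cinner_prod_def cinner_add_left)
  show "cinner (scaleC r x) y = cnj r * cinner x y"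
    by (simp add: cinner_prod_def scaleC_prod_def cinner_scaleC_left algebra_simps)
  show "Im (cinner x x) = 0" and "0 \<le> Re (cinner x x)"
    by (simp_all add: cinner_prod_def cinner_self)
  show "norm x = sqrt (Re (cinner x x))"
    by (simp add: cinner_prod_def cinner_self norm_prod_def)
  have "cinner x x = of_real ((norm (fst x))\<^sup>2 + (norm (snd x))\<^sup>2)"
    by (simp add: cinner_prod_def cinner_self)
  then show "cinner x x = 0 \<longleftrightarrow> x = 0"
    by (simp add: add_nonneg_eq_0_iff prod_eq_iff del: of_real_add)
qed

end

instance prod :: (chilbert, chilbert) chilbert ..

lemma app_pair [simp]: "app (D, f) = f"
  by (simp add: app_def)

lemma op_dom_pair [simp]: "op_dom (D, f) = D"
  by (simp add: op_dom_def)

lemma op_adjoint_app: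
  fixes S :: "'a::complex_inner op"
  assumes "densely_defined S" and "y \<in> op_dom (op_adjoint S)" and "x \<in> op_dom S"
  shows "cinner (app S x) y = cinner x (app (op_adjoint S) y)"
proof -
  let ?P = "\<lambda>z. \<forall>x\<in>op_dom S. cinner (app S x) y = cinner x z"
  obtain z where z: "?P z"
    using assms(2) by (auto simp: op_adjoint_def)
  \<comment> \<open>density of the domain makes the \<open>THE\<close> in the definition of the adjoint well defined\<close>
  have "z' = z" if "?P z'" for z'
    using eq_if_cinner_eq_on_dense[of "op_dom S" z' z] assms(1) that z
    by (simp add: densely_defined_def)
  then have "(THE z. ?P z) = z"
    using z by (rule the_equality[rotated])
  then have "app (op_adjoint S) y = z"
    by (simp add: op_adjoint_def)
  then show ?thesis
    using z assms(3) by simp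
qed

lemma bounded_clinear_imp_bounded_linear:
  assumes "bounded_clinear T"
  shows "bounded_linear T"
  using assms by unfold_locales (auto simp: bounded_clinear_def scaleR_scaleC)

lemma op_adjoint_bop:
  fixes T :: "'a::chilbert \<Rightarrow> 'a"
  assumes "bounded_clinear T"
  shows "op_dom (op_adjoint (bop T)) = UNIV"
    and "cinner (T x) y = cinner x (app (op_adjoint (bop T)) y)"
proof -
  interpret bounded_linear T
    using assms by (rule bounded_clinear_imp_bounded_linear)
  have "\<exists>z. \<forall>x. cinner (T x) y = cinner x z" for y
  proof -
    have "continuous_on UNIV (\<lambda>x. cinner y (T x))"
      by (intro continuous_on_cinner continuous_on_const continuous_on continuous_on_id)
    then obtain z where z: "\<And>x. cinner y (T x) = cinner z x"
      using Riesz_representation[of "\<lambda>x. cinner y (T x)"] assms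
      by (auto simp: bounded_clinear_def cinner_add_right cinner_scaleC_right)
    have "cinner (T x) y = cinner x z" for x
      using arg_cong[OF z[of x], of cnj] by simp
    then show ?thesis
      by blast
  qed
  then show dom: "op_dom (op_adjoint (bop T)) = UNIV"
    by (auto simp: op_adjoint_def bop_def)
  have "densely_defined (bop T)"
    by (simp add: densely_defined_def bop_def)
  from op_adjoint_app[OF this, of y x] dom show "cinner (T x) y = cinner x (app (op_adjoint (bop T)) y)"
    by (simp add: bop_def)
qed

lemma csubspace_graph:
  fixes S :: "'a::complex_vector op"
  assumes "linear_op S"
  shows "csubspace (graph S)"
  unfolding csubspace_def
proof (intro conjI ballI allI)
  have dom: "csubspace (op_dom S)"
    and add: "\<forall>x\<in>op_dom S. \<forall>y\<in>op_dom S. app S (x + y) = app S x + app S y"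
    using assms by (simp_all add: linear_op_def)
  then have "app S (0 + 0) = app S 0 + app S 0"
    unfolding csubspace_def by blast
  then have "app S 0 = 0"
    by simp
  then show "0 \<in> graph S"
    using dom by (auto simp: graph_def csubspace_def zero_prod_def)
next
  fix p q assume "p \<in> graph S" "q \<in> graph S"
  then obtain x y where "p = (x, app S x)" "q = (y, app S y)" "x \<in> op_dom S" "y \<in> op_dom S"
    by (auto simp: graph_def)
  moreover from this have "x + y \<in> op_dom S" "app S (x + y) = app S x + app S y"
    using assms by (auto simp: linear_op_def csubspace_def)
  ultimately show "p + q \<in> graph S"
    unfolding graph_def by force
next
  fix c p assume "p \<in> graph S"
  then obtain x where "p = (x, app S x)" "x \<in> op_dom S"
    by (auto simp: graph_def)
  moreover from this have "scaleC c x \<in> op_dom S" "app S (scaleC c x) = scaleC c (app S x)"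
    using assms by (auto simp: linear_op_def csubspace_def)
  ultimately show "scaleC c p \<in> graph S"
    unfolding graph_def by (force simp: scaleC_prod_def)
qed

lemma csubspace_op_dom_adjoint:
  fixes S :: "'a::complex_inner op"
  shows "csubspace (op_dom (op_adjoint S))"
proof -
  let ?D = "op_dom (op_adjoint S)"
  have dom: "y \<in> ?D \<longleftrightarrow> (\<exists>z. \<forall>x\<in>op_dom S. cinner (app S x) y = cinner x z)" for y
    by (simp add: op_adjoint_def)
  show ?thesis
    unfolding csubspace_def
  proof (intro conjI ballI allI)
    show "0 \<in> ?D"
      unfolding dom by (intro exI[of _ 0]) simp
  next
    fix y1 y2 assume "y1 \<in> ?D" "y2 \<in> ?D"
    then obtain z1 z2 where "\<forall>x\<in>op_dom S. cinner (app S x) y1 = cinner x z1"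
      and "\<forall>x\<in>op_dom S. cinner (app S x) y2 = cinner x z2"
      unfolding dom by blast
    then show "y1 + y2 \<in> ?D"
      unfolding dom by (intro exI[of _ "z1 + z2"]) (simp add: cinner_add_right)
  next
    fix c y assume "y \<in> ?D"
    then obtain z where "\<forall>x\<in>op_dom S. cinner (app S x) y = cinner x z"
      unfolding dom by blast
    then show "scaleC c y \<in> ?D"
      unfolding dom by (intro exI[of _ "scaleC c z"]) (simp add: cinner_scaleC_right)
  qed
qed

lemma densely_defined_op_adjoint:
  fixes A :: "'a::chilbert op"
  assumes "linear_op A" and "closable A"
  shows "densely_defined (op_adjoint A)"
proof (rule ccontr)
  let ?D = "op_dom (op_adjoint A)"
  assume "\<not> densely_defined (op_adjoint A)"
  then obtain x0 where "x0 \<notin> closure ?D"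
    by (auto simp: densely_defined_def)
  then obtain u where u_orth: "\<And>v. v \<in> ?D \<Longrightarrow> cinner v u = 0" and "cinner u x0 \<noteq> 0"
    using exists_orthogonal_to_csubspace[OF csubspace_op_dom_adjoint] by blast
  \<comment> \<open>a vector \<open>(a, b)\<close> orthogonal to the graph of \<open>A\<close> has \<open>b \<in> D(A\<^sup>*)\<close>, so \<open>(0, u)\<close> lies in the closed graph\<close>
  have "(0, u) \<in> closure (graph A)"
  proof (rule ccontr)
    assume "(0, u) \<notin> closure (graph A)"
    then obtain ab where orth: "\<And>p. p \<in> graph A \<Longrightarrow> cinner p ab = 0" and "cinner ab (0, u) \<noteq> 0"
      using exists_orthogonal_to_csubspace[OF csubspace_graph[OF assms(1)]] by blast
    then have "cinner (snd ab) u \<noteq> 0"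
      by (simp add: cinner_prod_def)
    moreover have "snd ab \<in> ?D"
    proof -
      have "cinner (app A x) (snd ab) = cinner x (- fst ab)" if "x \<in> op_dom A" for x
        using orth[of "(x, app A x)"] that
        by (auto simp: graph_def cinner_prod_def cinner_minus_right eq_neg_iff_add_eq_0 add.commute)
      then show ?thesis
        by (auto simp: op_adjoint_def)
    qed
    ultimately show False
      using u_orth by blast
  qed
  then have "u = 0"
    using assms(2) by (simp add: closable_def)
  with \<open>cinner u x0 \<noteq> 0\<close> show False
    by simp
qed

lemma closure_graph_cinner_adjoint:
  fixes A :: "'a::chilbert op"
  assumes "densely_defined A" and "p \<in> closure (graph A)" and "v \<in> op_dom (op_adjoint A)"
  shows "cinner (snd p) v = cinner (fst p) (app (op_adjoint A) v)"
proof -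
  let ?P = "{p::'a \<times> 'a. cinner (snd p) v = cinner (fst p) (app (op_adjoint A) v)}"
  have "closed ?P"
    by (intro closed_Collect_eq continuous_intros)
  moreover have "graph A \<subseteq> ?P"
    using op_adjoint_app[OF assms(1,3)] by (auto simp: graph_def)
  ultimately show ?thesis
    using closure_minimal assms(2) by blast
qed

lemma op_closure_cinner_adjoint:
  fixes A :: "'a::chilbert op"
  assumes "densely_defined A" and "densely_defined (op_adjoint A)"
    and "x \<in> op_dom (op_closure A)" and "v \<in> op_dom (op_adjoint A)"
  shows "cinner (app (op_closure A) x) v = cinner x (app (op_adjoint A) v)"
proof -
  obtain y where y: "(x, y) \<in> closure (graph A)"
    using assms(3) by (auto simp: op_closure_def)
  have "y' = y" if "(x, y') \<in> closure (graph A)" for y'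
  proof -
    have "cinner v y' = cinner v y" if "v \<in> op_dom (op_adjoint A)" for v
    proof -
      have "cinner y' v = cinner y v"
        using closure_graph_cinner_adjoint[OF assms(1) \<open>(x, y') \<in> _\<close> that]
          closure_graph_cinner_adjoint[OF assms(1) y that] by simp
      from arg_cong[OF this, of cnj] show ?thesis
        by simp
    qed
    then show ?thesis
      by (rule eq_if_cinner_eq_on_dense[OF assms(2)[unfolded densely_defined_def]])
  qed
  then have "(THE y. (x, y) \<in> closure (graph A)) = y"
    using y by (rule the_equality[rotated])
  then have "app (op_closure A) x = y"
    by (simp add: op_closure_def)
  then show ?thesis
    using closure_graph_cinner_adjoint[OF assms(1) y assms(4)] by simp
qed

lemma op_dom_closure_subset_adjoint:
  fixes A A0 :: "'a::chilbert op"
  assumes "densely_defined A" and "op_subset A0 (op_adjoint A)"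
  shows "op_dom (op_closure A0) \<subseteq> op_dom (op_adjoint A)"
proof
  fix y assume "y \<in> op_dom (op_closure A0)"
  then obtain w where yw: "(y, w) \<in> closure (graph A0)"
    by (auto simp: op_closure_def)
  have "cinner (app A x) y = cinner x w" if x: "x \<in> op_dom A" for x
  proof -
    let ?P = "{p::'a \<times> 'a. cinner (app A x) (fst p) = cinner x (snd p)}"
    have "closed ?P"
      by (intro closed_Collect_eq continuous_intros)
    moreover have "graph A0 \<subseteq> ?P"
    proof
      fix p assume "p \<in> graph A0"
      then obtain v where v: "p = (v, app A0 v)" "v \<in> op_dom A0"
        by (auto simp: graph_def)
      then have "v \<in> op_dom (op_adjoint A)" "app A0 v = app (op_adjoint A) v"
        using assms(2) by (auto simp: op_subset_def)
      then show "p \<in> ?P"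
        using op_adjoint_app[OF assms(1) _ x] v by simp
    qed
    ultimately have "closure (graph A0) \<subseteq> ?P"
      by (rule closure_minimal[rotated])
    then show ?thesis
      using yw by auto
  qed
  then show "y \<in> op_dom (op_adjoint A)"
    by (auto simp: op_adjoint_def)
qed

lemma densely_defined_op_closure:
  fixes A :: "'a::real_normed_vector op"
  assumes "densely_defined A"
  shows "densely_defined (op_closure A)"
proof -
  have "op_dom A \<subseteq> op_dom (op_closure A)"
    using closure_subset[of "graph A"] by (auto simp: op_closure_def graph_def)
  then show ?thesis
    using assms closure_mono unfolding densely_defined_def by blast
qed

lemma op_closure_of_continuous_extension:
  fixes S :: "'a::real_normed_vector op"
  assumes "densely_defined S" and "continuous_on UNIV g"
    and "\<And>x. x \<in> op_dom S \<Longrightarrow> app S x = g x"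
  shows "op_dom (op_closure S) = UNIV" and "app (op_closure S) = g"
proof -
  have "closure (graph S) = {p. snd p = g (fst p)}"
  proof
    have "closed {p::'a \<times> 'a. snd p = g (fst p)}"
      by (intro closed_Collect_eq continuous_intros continuous_on_compose2[OF assms(2)]) auto
    moreover have "graph S \<subseteq> {p. snd p = g (fst p)}"
      using assms(3) by (auto simp: graph_def)
    ultimately show "closure (graph S) \<subseteq> {p. snd p = g (fst p)}"
      by (rule closure_minimal[rotated])
  next
    show "{p. snd p = g (fst p)} \<subseteq> closure (graph S)"
    proof
      fix p :: "'a \<times> 'a" assume "p \<in> {p. snd p = g (fst p)}"
      then have p: "p = (fst p, g (fst p))"
        by (simp add: prod_eq_iff)
      have "fst p \<in> closure (op_dom S)"
        using assms(1) by (simp add: densely_defined_def)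
      then obtain xs where xs: "\<And>k. xs k \<in> op_dom S" "xs \<longlonglongrightarrow> fst p"
        by (auto simp: closure_sequential)
      have "(\<lambda>k. (xs k, g (xs k))) \<longlonglongrightarrow> (fst p, g (fst p))"
        using xs(2) assms(2) by (intro tendsto_intros) (auto simp: continuous_on_def intro: tendsto_compose)
      moreover have "(xs k, g (xs k)) \<in> graph S" for k
        using xs(1)[of k] assms(3)[of "xs k"] by (auto simp: graph_def)
      ultimately show "p \<in> closure (graph S)"
        using p by (metis (no_types, lifting) closure_sequential)
    qed
  qed
  then show "op_dom (op_closure S) = UNIV" and "app (op_closure S) = g"
    by (auto simp: op_closure_def)
qed

lemma op_closure_lipschitz:
  fixes S :: "'a::{real_normed_vector, complete_space} op"
  assumes "densely_defined S" and "K-lipschitz_on (op_dom S) (app S)"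
  shows "op_dom (op_closure S) = UNIV" and "K-lipschitz_on UNIV (app (op_closure S))"
    and "\<And>x. x \<in> op_dom S \<Longrightarrow> app (op_closure S) x = app S x"
proof -
  obtain g where "K-lipschitz_on UNIV g" and g: "\<And>x. x \<in> op_dom S \<Longrightarrow> g x = app S x"
    using lipschitz_extend_closure[OF assms(2)] assms(1) by (auto simp: densely_defined_def)
  moreover have "continuous_on UNIV g"
    using \<open>K-lipschitz_on UNIV g\<close> by (rule lipschitz_on_continuous_on)
  ultimately show "op_dom (op_closure S) = UNIV" and "K-lipschitz_on UNIV (app (op_closure S))"
    and "\<And>x. x \<in> op_dom S \<Longrightarrow> app (op_closure S) x = app S x"
    using op_closure_of_continuous_extension[OF assms(1), of g] by auto
qed

section \<open>Skew-adjoint pairs of operators\<close>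

lemma skew_adjoint_additive_scaleC:
  fixes f g :: "'a::complex_inner \<Rightarrow> 'a"
  assumes skew: "\<And>x y. cinner (f x) y = - cinner x (g y)"
  shows "f (x + x') = f x + f x'" and "f (scaleC c x) = scaleC c (f x)"
  by (rule eq_if_cinner_left_eq; simp add: skew cinner_add_left cinner_scaleC_left cinner_add_right
      cinner_scaleC_right)+

lemma skew_adjoint_bounded_clinear:
  fixes f g :: "'a::complex_inner \<Rightarrow> 'a"
  assumes skew: "\<And>x y. cinner (f x) y = - cinner x (g y)" and lip: "K-lipschitz_on UNIV f"
  shows "bounded_clinear f"
proof -
  have "f 0 = 0"
    using skew_adjoint_additive_scaleC(1)[OF skew, of 0 0] by simp
  then have "norm (f x) \<le> norm x * K" for x
    using lipschitz_on_normD[OF lip, of x 0] by (simp add: mult.commute)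
  then show ?thesis
    unfolding bounded_clinear_def using skew_adjoint_additive_scaleC[OF skew] by blast
qed

lemma skew_adjoint_lipschitz:
  fixes S R :: "'a::complex_inner op"
  assumes dense_S: "densely_defined S" and dense_R: "densely_defined R" and "K \<ge> 0"
    and bound: "\<And>x. x \<in> op_dom S \<Longrightarrow> norm (app S x) \<le> K * norm x"
    and skew: "\<And>x y. x \<in> op_dom S \<Longrightarrow> y \<in> op_dom R \<Longrightarrow>
      cinner (app S x) y = - cinner x (app R y)"
  shows "K-lipschitz_on (op_dom S) (app S)" and "K-lipschitz_on (op_dom R) (app R)"
proof -
  have S_weak: "cmod (cinner (app S x) y) \<le> K * norm x * norm y" if "x \<in> op_dom S" for x y
    using cinner_Cauchy_Schwarz bound[OF that] by (meson mult_right_mono norm_ge_zero order_trans)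
  have R_bound: "norm (app R y) \<le> K * norm y" if "y \<in> op_dom R" for y
  proof (rule norm_le_if_cinner_le_on_dense[OF dense_S[unfolded densely_defined_def]])
    fix x assume "x \<in> op_dom S"
    then have "cmod (cinner x (app R y)) = cmod (cinner (app S x) y)"
      using skew[OF _ that] by simp
    also have "\<dots> \<le> K * norm x * norm y"
      using S_weak \<open>x \<in> op_dom S\<close> by blast
    finally show "cmod (cinner x (app R y)) \<le> K * norm y * norm x"
      by (simp add: algebra_simps)
  qed (use \<open>K \<ge> 0\<close> in simp)
  have "norm (app R y - app R y') \<le> K * norm (y - y')" if "y \<in> op_dom R" "y' \<in> op_dom R" for y y'
  proof (rule norm_le_if_cinner_le_on_dense[OF dense_S[unfolded densely_defined_def]])
    fix x assume "x \<in> op_dom S"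
    then have "cmod (cinner x (app R y - app R y')) = cmod (cinner (app S x) (y - y'))"
      using skew that by (simp add: cinner_diff_right norm_minus_commute)
    also have "\<dots> \<le> K * norm x * norm (y - y')"
      using S_weak \<open>x \<in> op_dom S\<close> by blast
    finally show "cmod (cinner x (app R y - app R y')) \<le> K * norm (y - y') * norm x"
      by (simp add: algebra_simps)
  qed (use \<open>K \<ge> 0\<close> in simp)
  then show "K-lipschitz_on (op_dom R) (app R)"
    using \<open>K \<ge> 0\<close> by (intro lipschitz_onI) (simp add: dist_norm)
  have "norm (app S x - app S x') \<le> K * norm (x - x')" if "x \<in> op_dom S" "x' \<in> op_dom S" for x x'
  proof (rule norm_le_if_cinner_le_on_dense'[OF dense_R[unfolded densely_defined_def]])
    fix y assume "y \<in> op_dom R"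
    then have "cmod (cinner (app S x - app S x') y) = cmod (cinner (x - x') (app R y))"
      using skew that by (simp add: cinner_diff_left norm_minus_commute)
    also have "\<dots> \<le> norm (x - x') * (K * norm y)"
      using cinner_Cauchy_Schwarz R_bound[OF \<open>y \<in> op_dom R\<close>]
      by (meson mult_left_mono norm_ge_zero order_trans)
    finally show "cmod (cinner (app S x - app S x') y) \<le> K * norm (x - x') * norm y"
      by (simp add: algebra_simps)
  qed (use \<open>K \<ge> 0\<close> in simp)
  then show "K-lipschitz_on (op_dom S) (app S)"
    using \<open>K \<ge> 0\<close> by (intro lipschitz_onI) (simp add: dist_norm)
qed

lemma skew_adjoint_extend_dense:
  fixes f g :: "'a::complex_inner \<Rightarrow> 'a"
  assumes "continuous_on UNIV f" and "continuous_on UNIV g"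
    and "closure D = UNIV" and "closure E = UNIV"
    and skew: "\<And>x y. x \<in> D \<Longrightarrow> y \<in> E \<Longrightarrow> cinner (f x) y = - cinner x (g y)"
  shows "cinner (f x) y = - cinner x (g y)"
proof -
  have closed: "closed {x. cinner (f x) y = - cinner x (g y)}" "closed {y. cinner (f x) y = - cinner x (g y)}"
    for x y by (intro closed_Collect_eq continuous_intros assms(1,2))+
  have "{x. cinner (f x) y = - cinner x (g y)} = UNIV" if "y \<in> E" for y
    using skew that by (intro closed_superset_of_dense_eq_UNIV[OF assms(3) closed(1)]) auto
  then have "{y. cinner (f x) y = - cinner x (g y)} = UNIV"
    by (intro closed_superset_of_dense_eq_UNIV[OF assms(4) closed(2)]) auto
  then show ?thesis
    by blast
qed

lemma op_closure_skew_adjoint: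
  fixes S R :: "'a::chilbert op"
  assumes dense_S: "densely_defined S" and dense_R: "densely_defined R" and "K \<ge> 0"
    and bound: "\<And>x. x \<in> op_dom S \<Longrightarrow> norm (app S x) \<le> K * norm x"
    and skew: "\<And>x y. x \<in> op_dom S \<Longrightarrow> y \<in> op_dom R \<Longrightarrow>
      cinner (app S x) y = - cinner x (app R y)"
  shows "op_dom (op_closure S) = UNIV" and "op_dom (op_closure R) = UNIV"
    and "bounded_clinear (app (op_closure S))" and "bounded_clinear (app (op_closure R))"
    and "\<And>x y. cinner (app (op_closure S) x) y = - cinner x (app (op_closure R) y)"
    and "\<And>x. x \<in> op_dom S \<Longrightarrow> app (op_closure S) x = app S x"
    and "\<And>y. y \<in> op_dom R \<Longrightarrow> app (op_closure R) y = app R y"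
proof -
  let ?f = "app (op_closure S)" and ?g = "app (op_closure R)"
  note S_closure = op_closure_lipschitz[OF dense_S skew_adjoint_lipschitz(1)[OF assms]]
  note R_closure = op_closure_lipschitz[OF dense_R skew_adjoint_lipschitz(2)[OF assms]]
  have "continuous_on UNIV ?f" and "continuous_on UNIV ?g"
    using S_closure(2) R_closure(2) by (auto intro: lipschitz_on_continuous_on)
  then have skew_closure: "cinner (?f x) y = - cinner x (?g y)" for x y
    using dense_S dense_R unfolding densely_defined_def
    by (rule skew_adjoint_extend_dense) (simp add: skew S_closure(3) R_closure(3))
  then show "\<And>x y. cinner (?f x) y = - cinner x (?g y)" and "bounded_clinear ?f"
    using S_closure(2) by (auto intro: skew_adjoint_bounded_clinear)
  have "cinner (?g y) x = - cinner y (?f x)" for x y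
    using arg_cong[OF skew_closure[of x y], of cnj] by simp
  then show "bounded_clinear ?g"
    using R_closure(2) by (rule skew_adjoint_bounded_clinear)
  show "op_dom (op_closure S) = UNIV" and "op_dom (op_closure R) = UNIV"
    and "\<And>x. x \<in> op_dom S \<Longrightarrow> ?f x = app S x" and "\<And>y. y \<in> op_dom R \<Longrightarrow> ?g y = app R y"
    using S_closure R_closure by auto
qed

definition uniformly_bounded :: "('i \<Rightarrow> 'a::real_normed_vector \<Rightarrow> 'b::real_normed_vector) \<Rightarrow> bool"
  where "uniformly_bounded F \<longleftrightarrow> (\<exists>K. \<forall>i x. norm (F i x) \<le> K * norm x)"

lemma uniformly_bounded_if_cmod_cinner_eq:
  fixes F G :: "'i \<Rightarrow> 'a::complex_inner \<Rightarrow> 'a"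
  assumes "uniformly_bounded F" and "\<And>i x y. cmod (cinner (F i x) y) = cmod (cinner x (G i y))"
  shows "uniformly_bounded G"
proof -
  obtain K where K: "\<And>i x. norm (F i x) \<le> K * norm x"
    using assms(1) by (auto simp: uniformly_bounded_def)
  have "norm (G i y) \<le> \<bar>K\<bar> * norm y" for i y
  proof (rule norm_le_if_cinner_le_on_dense[of UNIV])
    fix x
    have "cmod (cinner x (G i y)) \<le> norm (F i x) * norm y"
      using assms(2) cinner_Cauchy_Schwarz by metis
    also have "\<dots> \<le> \<bar>K\<bar> * norm x * norm y"
      by (intro mult_right_mono order_trans[OF K[of i x]] mult_right_mono) auto
    finally show "cmod (cinner x (G i y)) \<le> \<bar>K\<bar> * norm y * norm x"
      by (simp add: algebra_simps)
  qed auto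
  then show ?thesis
    by (auto simp: uniformly_bounded_def)
qed

lemma uniformly_bounded_iff_skew_adjoint:
  fixes F G :: "'i \<Rightarrow> 'a::complex_inner \<Rightarrow> 'a"
  assumes skew: "\<And>i x y. cinner (F i x) y = - cinner x (G i y)"
  shows "uniformly_bounded F \<longleftrightarrow> uniformly_bounded G"
proof -
  have "cinner (G i y) x = - cinner y (F i x)" for i x y
    using arg_cong[OF skew[of i x y], of cnj] by simp
  then have "cmod (cinner (G i y) x) = cmod (cinner y (F i x))" for i x y
    by simp
  then show ?thesis
    using skew by (metis norm_minus_cancel uniformly_bounded_if_cmod_cinner_eq)
qed

lemma wot_tendsto_zero_iff_skew_adjoint:
  fixes F G :: "nat \<Rightarrow> 'a::complex_inner \<Rightarrow> 'a"
  assumes skew: "\<And>n x y. cinner (F n x) y = - cinner x (G n y)"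
  shows "wot_tendsto F (\<lambda>_. 0) \<longleftrightarrow> wot_tendsto G (\<lambda>_. 0)"
proof -
  have "(\<lambda>n. cinner x (G n y)) \<longlonglongrightarrow> 0 \<longleftrightarrow> (\<lambda>n. cinner y (F n x)) \<longlonglongrightarrow> 0" for x y
  proof -
    have "(\<lambda>n. norm (cinner x (G n y))) = (\<lambda>n. norm (cinner y (F n x)))"
      using skew complex_mod_cnj by (metis cnj_cinner norm_minus_cancel)
    then show ?thesis
      by (metis tendsto_norm_zero_iff)
  qed
  then show ?thesis
    unfolding wot_tendsto_def by auto
qed

section \<open>Norm bounds and uniform boundedness\<close>

lemma norm_le_if_bounded_on_ball:
  fixes G :: "'a::real_normed_vector \<Rightarrow> 'b::real_normed_vector"
  assumes "linear G" and "r > 0" and bound: "\<And>z. norm z < r \<Longrightarrow> norm (G z) \<le> c"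
  shows "norm (G x) \<le> 2 * c / r * norm x"
proof (cases "x = 0")
  case True
  then show ?thesis
    using linear_0[OF assms(1)] by simp
next
  case False
  then have "norm x > 0"
    by simp
  then have "norm (G (scaleR (r / (2 * norm x)) x)) \<le> c"
    using \<open>r > 0\<close> by (intro bound) simp
  then have "r / (2 * norm x) * norm (G x) \<le> c"
    using \<open>r > 0\<close> by (simp add: linear_scale[OF assms(1)])
  then show ?thesis
    using \<open>r > 0\<close> \<open>norm x > 0\<close> by (simp add: field_simps)
qed

lemma norm_le_if_bounded_on_dense_unit_ball:
  fixes G :: "'a::real_normed_vector \<Rightarrow> 'b::real_normed_vector"
  assumes "bounded_linear G" and "closure D = UNIV"
    and bound: "\<And>d. d \<in> D \<Longrightarrow> norm d \<le> 1 \<Longrightarrow> norm (G d) \<le> M"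
  shows "norm (G x) \<le> 2 * M * norm x"
proof -
  interpret G: bounded_linear G by fact
  have "closed {x. norm (G x) \<le> M}"
    by (intro closed_Collect_le continuous_intros G.continuous_on continuous_on_id)
  moreover have "D \<inter> ball 0 1 \<subseteq> {x. norm (G x) \<le> M}"
    using bound by auto
  ultimately have "closure (D \<inter> ball 0 1) \<subseteq> {x. norm (G x) \<le> M}"
    by (rule closure_minimal[rotated])
  moreover have "ball 0 1 \<subseteq> closure (D \<inter> ball 0 1)"
    using open_Int_closure_subset[of "ball 0 1" D] assms(2) by (simp add: Int_commute)
  ultimately have "norm (G z) \<le> M" if "norm z < 1" for z
    using that by auto
  then show ?thesis
    using norm_le_if_bounded_on_ball[OF G.linear, of 1 M] by simp
qed

lemma SUP_op_norm_less_infinity_iff_unit_ball: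
  fixes S :: "'i \<Rightarrow> 'a::real_normed_vector op"
  shows "(SUP i. op_norm (S i)) < \<infinity> \<longleftrightarrow>
    (\<exists>M. \<forall>i. \<forall>f\<in>op_dom (S i). norm f \<le> 1 \<longrightarrow> norm (app (S i) f) \<le> M)"
proof
  assume "(SUP i. op_norm (S i)) < \<infinity>"
  then obtain M where M: "(SUP i. op_norm (S i)) \<le> ereal M"
    by (cases "SUP i. op_norm (S i)") (auto intro: exI[of _ 0])
  have "norm (app (S i) f) \<le> M" if "f \<in> op_dom (S i)" "norm f \<le> 1" for i f
  proof -
    have "ereal (norm (app (S i) f)) \<le> op_norm (S i)"
      unfolding op_norm_def using that by (intro SUP_upper) auto
    also have "\<dots> \<le> ereal M"
      using M SUP_upper[of i UNIV "\<lambda>i. op_norm (S i)"] by simp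
    finally show ?thesis
      by simp
  qed
  then show "\<exists>M. \<forall>i. \<forall>f\<in>op_dom (S i). norm f \<le> 1 \<longrightarrow> norm (app (S i) f) \<le> M"
    by blast
next
  assume "\<exists>M. \<forall>i. \<forall>f\<in>op_dom (S i). norm f \<le> 1 \<longrightarrow> norm (app (S i) f) \<le> M"
  then obtain M where "\<And>i f. f \<in> op_dom (S i) \<Longrightarrow> norm f \<le> 1 \<Longrightarrow> norm (app (S i) f) \<le> M"
    by blast
  then have "op_norm (S i) \<le> ereal M" for i
    unfolding op_norm_def by (intro SUP_least) auto
  then have "(SUP i. op_norm (S i)) \<le> ereal M"
    by (rule SUP_least)
  then show "(SUP i. op_norm (S i)) < \<infinity>"
    using le_less_trans by fastforce
qed

lemma SUP_op_norm_less_infinity_iff: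
  fixes S :: "'i \<Rightarrow> 'a::real_normed_vector op"
  assumes "\<And>i. densely_defined (S i)" and "\<And>i. bounded_linear (G i)"
    and "\<And>i x. x \<in> op_dom (S i) \<Longrightarrow> app (S i) x = G i x"
  shows "(SUP i. op_norm (S i)) < \<infinity> \<longleftrightarrow> uniformly_bounded G"
  unfolding SUP_op_norm_less_infinity_iff_unit_ball uniformly_bounded_def
proof safe
  fix M assume "\<forall>i. \<forall>f\<in>op_dom (S i). norm f \<le> 1 \<longrightarrow> norm (app (S i) f) \<le> M"
  then have "norm (G i x) \<le> 2 * M * norm x" for i x
    using assms by (intro norm_le_if_bounded_on_dense_unit_ball) (auto simp: densely_defined_def)
  then show "\<exists>K. \<forall>i x. norm (G i x) \<le> K * norm x"
    by blast
next
  fix K assume K: "\<forall>i x. norm (G i x) \<le> K * norm x"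
  have "norm (app (S i) f) \<le> \<bar>K\<bar>" if "f \<in> op_dom (S i)" "norm f \<le> 1" for i f
  proof -
    have "norm (G i f) \<le> \<bar>K\<bar> * norm f"
      using K by (meson abs_ge_self mult_right_mono norm_ge_zero order_trans)
    also have "\<dots> \<le> \<bar>K\<bar>"
      using that(2) by (simp add: mult_left_le)
    finally show ?thesis
      using assms(3) that(1) by simp
  qed
  then show "\<exists>M. \<forall>i. \<forall>f\<in>op_dom (S i). norm f \<le> 1 \<longrightarrow> norm (app (S i) f) \<le> M"
    by blast
qed

lemma Baire_exists_ball:
  fixes E :: "nat \<Rightarrow> 'a::{metric_space, complete_space} set"
  assumes "\<And>k. closed (E k)" and "(\<Union>k. E k) = UNIV"
  obtains k x r where "r > 0" and "ball x r \<subseteq> E k"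
proof -
  have "\<exists>k. interior (E k) \<noteq> {}"
  proof (rule ccontr)
    assume "\<not> ?thesis"
    then have empty: "interior (E k) = {}" for k
      by blast
    have "euclidean interior_of \<Union>(range E) = {}"
      by (rule Baire_category_alt) (auto simp: completely_metrizable_space_euclidean assms(1) empty)
    then show False
      using assms(2) by simp
  qed
  then obtain k x where "x \<in> interior (E k)"
    by blast
  then show ?thesis
    using that mem_interior by blast
qed

theorem uniform_boundedness:
  fixes F :: "'i \<Rightarrow> 'a::{real_normed_vector, complete_space} \<Rightarrow> 'b::real_normed_vector"
  assumes lin: "\<And>i. bounded_linear (F i)" and pointwise: "\<And>x. \<exists>M. \<forall>i. norm (F i x) \<le> M"
  shows "uniformly_bounded F"
proof -
  define E where "E k = {x. \<forall>i. norm (F i x) \<le> real k}" for k :: nat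
  have closed_E: "closed (E k)" for k
  proof -
    have "closed {x. norm (F i x) \<le> real k}" for i
      by (intro closed_Collect_le continuous_intros bounded_linear.continuous_on[OF lin] continuous_on_id)
    moreover have "E k = (\<Inter>i. {x. norm (F i x) \<le> real k})"
      by (auto simp: E_def)
    ultimately show ?thesis
      by auto
  qed
  have "x \<in> (\<Union>k. E k)" for x
  proof -
    obtain M where "\<forall>i. norm (F i x) \<le> M"
      using pointwise by blast
    moreover have "M \<le> real (nat \<lceil>M\<rceil>)"
      by linarith
    ultimately have "x \<in> E (nat \<lceil>M\<rceil>)"
      unfolding E_def by (auto intro: order_trans)
    then show ?thesis
      by blast
  qed
  then have "(\<Union>k. E k) = UNIV"
    by blast
  then obtain k x0 r where "r > 0" and "ball x0 r \<subseteq> E k"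
    by (rule Baire_exists_ball[OF closed_E])
  then have "norm (F i z) \<le> 2 * real k" if "norm z < r" for i z
  proof -
    have "x0 + z \<in> E k" "x0 \<in> E k"
      using \<open>ball x0 r \<subseteq> E k\<close> \<open>r > 0\<close> that by (auto simp: dist_norm)
    then have "norm (F i (x0 + z)) \<le> real k" "norm (F i x0) \<le> real k"
      by (auto simp: E_def)
    moreover have "F i z = F i (x0 + z) - F i x0"
      by (simp add: linear_add[OF bounded_linear.linear[OF lin]])
    ultimately show ?thesis
      using norm_triangle_ineq4[of "F i (x0 + z)" "F i x0"] by simp
  qed
  then have "norm (F i x) \<le> 2 * (2 * real k) / r * norm x" for i x
    using \<open>r > 0\<close> by (intro norm_le_if_bounded_on_ball bounded_linear.linear[OF lin])
  then show ?thesis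
    unfolding uniformly_bounded_def by blast
qed

lemma tendsto_zero_if_equi_lipschitz_on_dense:
  fixes f :: "nat \<Rightarrow> 'a::real_normed_vector \<Rightarrow> 'b::real_normed_vector"
  assumes dense: "closure D = UNIV"
    and lip: "\<And>n x x'. norm (f n x - f n x') \<le> L * norm (x - x')"
    and conv: "\<And>d. d \<in> D \<Longrightarrow> (\<lambda>n. f n d) \<longlonglongrightarrow> 0"
  shows "(\<lambda>n. f n x) \<longlonglongrightarrow> 0"
proof (rule LIMSEQ_I)
  fix e :: real assume "e > 0"
  define L' where "L' = \<bar>L\<bar> + 1"
  have "L' > 0"
    by (simp add: L'_def)
  have "x \<in> closure D"
    using dense by simp
  then obtain d where "d \<in> D" and d: "norm (x - d) < e / (2 * L')"
    using \<open>e > 0\<close> \<open>L' > 0\<close>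
    by (metis closure_approachable dist_norm divide_pos_pos mult_pos_pos norm_minus_commute
        zero_less_numeral)
  obtain N where N: "\<And>n. n \<ge> N \<Longrightarrow> norm (f n d) < e / 2"
    using LIMSEQ_D[OF conv[OF \<open>d \<in> D\<close>], of "e / 2"] \<open>e > 0\<close> by auto
  have "norm (f n x) < e" if "n \<ge> N" for n
  proof -
    have "norm (f n x - f n d) \<le> L' * norm (x - d)"
      using lip[of n x d] by (smt (verit, best) L'_def mult_right_mono norm_ge_zero)
    also have "\<dots> \<le> e / 2"
      using d \<open>L' > 0\<close> by (simp add: field_simps)
    finally show ?thesis
      using N[OF that] norm_triangle_sub[of "f n x" "f n d"] by linarith
  qed
  then show "\<exists>N. \<forall>n\<ge>N. norm (f n x - 0) < e"
    by auto
qed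

lemma wot_tendsto_zero_if_uniformly_bounded:
  fixes G :: "nat \<Rightarrow> 'a::complex_inner \<Rightarrow> 'a"
  assumes lin: "\<And>n. linear (G n)" and "uniformly_bounded G"
    and dense: "closure D = UNIV" "closure E = UNIV"
    and conv: "\<And>x y. x \<in> D \<Longrightarrow> y \<in> E \<Longrightarrow> (\<lambda>n. cinner x (G n y)) \<longlonglongrightarrow> 0"
  shows "wot_tendsto G (\<lambda>_. 0)"
proof -
  obtain K where K: "\<And>n y. norm (G n y) \<le> K * norm y"
    using \<open>uniformly_bounded G\<close> by (auto simp: uniformly_bounded_def)
  have weak: "cmod (cinner x (G n y)) \<le> K * norm y * norm x" for n x y
  proof -
    have "cmod (cinner x (G n y)) \<le> norm x * norm (G n y)"
      by (rule cinner_Cauchy_Schwarz)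
    also have "\<dots> \<le> norm x * (K * norm y)"
      using K by (rule mult_left_mono) simp
    finally show ?thesis
      by (simp add: algebra_simps)
  qed
  \<comment> \<open>first extend the convergence to all \<open>x\<close>, then to all \<open>y\<close>, by equicontinuity\<close>
  have conv_E: "(\<lambda>n. cinner x (G n y)) \<longlonglongrightarrow> 0" if "y \<in> E" for x y
  proof (rule tendsto_zero_if_equi_lipschitz_on_dense[OF dense(1), of "\<lambda>n x. cinner x (G n y)"])
    fix n x x'
    show "norm (cinner x (G n y) - cinner x' (G n y)) \<le> K * norm y * norm (x - x')"
      using weak[where x = "x - x'"] by (simp add: cinner_diff_left)
  next
    fix d assume "d \<in> D"
    then show "(\<lambda>n. cinner d (G n y)) \<longlonglongrightarrow> 0"
      using conv that by blast
  qed
  have "(\<lambda>n. cinner x (G n y)) \<longlonglongrightarrow> 0" for x y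
  proof (rule tendsto_zero_if_equi_lipschitz_on_dense[OF dense(2), of "\<lambda>n y. cinner x (G n y)"])
    fix n y y'
    show "norm (cinner x (G n y) - cinner x (G n y')) \<le> K * norm x * norm (y - y')"
      using weak[where y = "y - y'"] by (simp add: cinner_diff_right linear_diff[OF lin] algebra_simps)
  next
    fix e assume "e \<in> E"
    then show "(\<lambda>n. cinner x (G n e)) \<longlonglongrightarrow> 0"
      by (rule conv_E)
  qed
  then show ?thesis
    by (simp add: wot_tendsto_def)
qed

lemma uniformly_bounded_if_wot_bounded:
  fixes G :: "'i \<Rightarrow> 'a::chilbert \<Rightarrow> 'a"
  assumes lin: "\<And>i. bounded_linear (G i)" and bounded: "\<And>x y. \<exists>M. \<forall>i. cmod (cinner x (G i y)) \<le> M"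
  shows "uniformly_bounded G"
proof (rule uniform_boundedness[OF lin])
  fix y
  have "uniformly_bounded (\<lambda>i x. cinner (G i y) x)"
  proof (rule uniform_boundedness)
    show "bounded_linear (cinner (G i y))" for i
      by (rule bounded_bilinear.bounded_linear_right[OF bounded_bilinear_cinner])
    show "\<exists>M. \<forall>i. norm (cinner (G i y) x) \<le> M" for x
      using bounded[of x y] by (metis cnj_cinner complex_mod_cnj)
  qed
  then obtain K where K: "\<And>i x. cmod (cinner (G i y) x) \<le> K * norm x"
    by (auto simp: uniformly_bounded_def)
  have "norm (G i y) \<le> \<bar>K\<bar>" for i
  proof (rule norm_le_if_cinner_le_on_dense'[of UNIV])
    show "cmod (cinner (G i y) x) \<le> \<bar>K\<bar> * norm x" for x
      by (rule order_trans[OF K mult_right_mono]) auto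
  qed auto
  then show "\<exists>M. \<forall>i. norm (G i y) \<le> M"
    by blast
qed

lemma uniformly_bounded_iff_wot_tendsto_zero:
  fixes G :: "nat \<Rightarrow> 'a::chilbert \<Rightarrow> 'a"
  assumes lin: "\<And>n. bounded_linear (G n)"
    and dense: "closure D = UNIV" "closure E = UNIV"
    and conv: "\<And>x y. x \<in> D \<Longrightarrow> y \<in> E \<Longrightarrow> (\<lambda>n. cinner x (G n y)) \<longlonglongrightarrow> 0"
  shows "uniformly_bounded G \<longleftrightarrow> wot_tendsto G (\<lambda>_. 0)"
proof
  assume "uniformly_bounded G"
  then show "wot_tendsto G (\<lambda>_. 0)"
    using lin bounded_linear.linear by (intro wot_tendsto_zero_if_uniformly_bounded[OF _ _ dense conv]) auto
next
  assume "wot_tendsto G (\<lambda>_. 0)"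
  then have "Bseq (\<lambda>n. cinner x (G n y))" for x y
    by (auto simp: wot_tendsto_def intro: convergent_imp_Bseq convergentI)
  then have "\<exists>M. \<forall>n. cmod (cinner x (G n y)) \<le> M" for x y
    unfolding Bseq_def by blast
  then show "uniformly_bounded G"
    by (rule uniformly_bounded_if_wot_bounded[OF lin])
qed

section \<open>Commutators\<close>

lemma wot_tendsto_cinner_left:
  assumes "wot_tendsto T L"
  shows "(\<lambda>n. cinner (T n y) x) \<longlonglongrightarrow> cinner (L y) x"
proof -
  have "(\<lambda>n. cnj (cinner x (T n y))) \<longlonglongrightarrow> cnj (cinner x (L y))"
    using assms by (intro tendsto_cnj) (simp add: wot_tendsto_def)
  then show ?thesis
    by simp
qed

lemma wot_tendsto_id_cinner_commutator:
  fixes A :: "'a::chilbert op" and T G :: "nat \<Rightarrow> 'a \<Rightarrow> 'a"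
  assumes dense_A: "densely_defined A" and dense_adj: "densely_defined (op_adjoint A)"
    and "wot_tendsto T id"
    and G: "\<And>n x y. x \<in> op_dom (op_closure A) \<Longrightarrow> y \<in> op_dom (op_adjoint A) \<Longrightarrow>
      cinner x (G n y) = cinner (T n x) (app (op_adjoint A) y) - cinner (T n (app (op_closure A) x)) y"
    and "x \<in> op_dom (op_closure A)" and "y \<in> op_dom (op_adjoint A)"
  shows "(\<lambda>n. cinner x (G n y)) \<longlonglongrightarrow> 0"
proof -
  have "(\<lambda>n. cinner (T n x) (app (op_adjoint A) y) - cinner (T n (app (op_closure A) x)) y)
      \<longlonglongrightarrow> cinner x (app (op_adjoint A) y) - cinner (app (op_closure A) x) y"
    using \<open>wot_tendsto T id\<close> by (intro tendsto_diff wot_tendsto_cinner_left[where L = id, simplified])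
  then show ?thesis
    using G[OF assms(5,6)] op_closure_cinner_adjoint[OF dense_A dense_adj assms(5,6)] by simp
qed

lemma commutator_skew_adjoint:
  fixes A :: "'a::chilbert op" and T :: "'a \<Rightarrow> 'a"
  defines "T' \<equiv> app (op_adjoint (bop T))"
  assumes dense_A: "densely_defined A" and dense_adj: "densely_defined (op_adjoint A)"
    and T: "bounded_clinear T" and invariant: "T' ` op_dom (op_adjoint A) \<subseteq> op_dom (op_adjoint A)"
  shows "op_dom (ad (op_adjoint (bop T)) (op_adjoint A)) = op_dom (op_adjoint A)"
    and "\<And>x y. x \<in> op_dom (ad (bop T) (op_closure A)) \<Longrightarrow> y \<in> op_dom (op_adjoint A) \<Longrightarrow>
      cinner (app (ad (bop T) (op_closure A)) x) y
        = - cinner x (app (ad (op_adjoint (bop T)) (op_adjoint A)) y)"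
    and "\<And>x y. x \<in> op_dom (op_closure A) \<Longrightarrow> y \<in> op_dom (op_adjoint A) \<Longrightarrow>
      cinner x (app (ad (op_adjoint (bop T)) (op_adjoint A)) y)
        = cinner (T x) (app (op_adjoint A) y) - cinner (T (app (op_closure A) x)) y"
proof -
  let ?A = "app (op_closure A)" and ?A' = "app (op_adjoint A)"
  have T': "\<And>x y. cinner (T x) y = cinner x (T' y)" and "op_dom (op_adjoint (bop T)) = UNIV"
    using op_adjoint_bop[OF T] by (auto simp: T'_def)
  then show dom: "op_dom (ad (op_adjoint (bop T)) (op_adjoint A)) = op_dom (op_adjoint A)"
    using invariant by (auto simp: ad_def op_minus_def op_mult_def T'_def)
  have closure_adj: "cinner (?A x) y = cinner x (?A' y)"
    if "x \<in> op_dom (op_closure A)" "y \<in> op_dom (op_adjoint A)" for x y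
    using op_closure_cinner_adjoint[OF dense_A dense_adj that] .
  have app_C: "app (ad (op_adjoint (bop T)) (op_adjoint A)) y = T' (?A' y) - ?A' (T' y)" for y
    by (simp add: ad_def op_minus_def op_mult_def T'_def)
  show "cinner x (app (ad (op_adjoint (bop T)) (op_adjoint A)) y)
      = cinner (T x) (?A' y) - cinner (T (?A x)) y"
    if "x \<in> op_dom (op_closure A)" "y \<in> op_dom (op_adjoint A)" for x y
    using closure_adj[OF that(1)] invariant that(2)
    by (auto simp: app_C cinner_diff_right T')
  show "cinner (app (ad (bop T) (op_closure A)) x) y
      = - cinner x (app (ad (op_adjoint (bop T)) (op_adjoint A)) y)"
    if "x \<in> op_dom (ad (bop T) (op_closure A))" "y \<in> op_dom (op_adjoint A)" for x y
  proof -
    have "x \<in> op_dom (op_closure A)" "T x \<in> op_dom (op_closure A)"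
      using that(1) by (auto simp: ad_def op_minus_def op_mult_def bop_def)
    moreover have "T' y \<in> op_dom (op_adjoint A)"
      using invariant that(2) by blast
    ultimately have "cinner (T (?A x)) y = cinner x (?A' (T' y))"
      and "cinner (?A (T x)) y = cinner x (T' (?A' y))"
      using closure_adj that(2) by (simp_all add: T')
    moreover have "app (ad (bop T) (op_closure A)) x = T (?A x) - ?A (T x)"
      by (simp add: ad_def op_minus_def op_mult_def bop_def)
    ultimately show ?thesis
      by (simp add: app_C cinner_diff_left cinner_diff_right)
  qed
qed

lemma commutator_closures:
  fixes A :: "'a::chilbert op" and T :: "'a \<Rightarrow> 'a"
  defines "B \<equiv> ad (bop T) (op_closure A)" and "C \<equiv> ad (op_adjoint (bop T)) (op_adjoint A)"
  assumes dense_A: "densely_defined A" and dense_adj: "densely_defined (op_adjoint A)"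
    and T: "bounded_clinear T"
    and invariant: "app (op_adjoint (bop T)) ` op_dom (op_adjoint A) \<subseteq> op_dom (op_adjoint A)"
    and dense_B: "densely_defined B" and "bounded_op B"
  shows "op_dom (op_closure B) = UNIV" and "op_dom (op_closure C) = UNIV"
    and "bounded_clinear (app (op_closure B))" and "bounded_clinear (app (op_closure C))"
    and "\<And>x y. cinner (app (op_closure B) x) y = - cinner x (app (op_closure C) y)"
    and "\<And>x. x \<in> op_dom B \<Longrightarrow> app (op_closure B) x = app B x"
    and "\<And>x y. x \<in> op_dom (op_closure A) \<Longrightarrow> y \<in> op_dom (op_adjoint A) \<Longrightarrow>
      cinner x (app (op_closure C) y)
        = cinner (T x) (app (op_adjoint A) y) - cinner (T (app (op_closure A) x)) y"
proof -
  note comm = commutator_skew_adjoint[OF dense_A dense_adj T invariant, folded B_def C_def]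
  obtain K where "K \<ge> 0" and K: "\<And>x. x \<in> op_dom B \<Longrightarrow> norm (app B x) \<le> K * norm x"
    using \<open>bounded_op B\<close> by (auto simp: bounded_op_def)
  have "densely_defined C"
    using comm(1) dense_adj by (simp add: densely_defined_def)
  note closures = op_closure_skew_adjoint[OF dense_B this \<open>K \<ge> 0\<close> K comm(2)[folded comm(1)]]
  then show "op_dom (op_closure B) = UNIV" and "op_dom (op_closure C) = UNIV"
    and "bounded_clinear (app (op_closure B))" and "bounded_clinear (app (op_closure C))"
    and "\<And>x y. cinner (app (op_closure B) x) y = - cinner x (app (op_closure C) y)"
    and "\<And>x. x \<in> op_dom B \<Longrightarrow> app (op_closure B) x = app B x"
    by auto
  show "cinner x (app (op_closure C) y)
      = cinner (T x) (app (op_adjoint A) y) - cinner (T (app (op_closure A) x)) y"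
    if "x \<in> op_dom (op_closure A)" "y \<in> op_dom (op_adjoint A)" for x y
    using closures(7) comm(1) comm(3)[OF that] that(2) by simp
qed

theorem proposition2:
  fixes A A0 :: "'a::chilbert op" and T :: "nat \<Rightarrow> 'a \<Rightarrow> 'a"
  assumes "linear_op A" and "closable A" and "densely_defined A"
    and "linear_op A0" and "op_subset A0 (op_adjoint A)"
    and "\<And>n. bounded_clinear (T n)"
    and "wot_tendsto T id"
    and f1: "\<And>n. densely_defined (ad (bop (T n)) (op_closure A)) \<and> bounded_op (ad (bop (T n)) (op_closure A))"
    and f2: "\<And>n. app (op_adjoint (bop (T n))) ` op_dom (op_adjoint A) \<subseteq> op_dom (op_closure A0)"
  shows "((SUP n. op_norm (ad (bop (T n)) (op_closure A))) < \<infinity>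
          \<longleftrightarrow> (SUP n. op_norm (op_closure (ad (op_adjoint (bop (T n))) (op_adjoint A)))) < \<infinity>)
       \<and> ((SUP n. op_norm (op_closure (ad (op_adjoint (bop (T n))) (op_adjoint A)))) < \<infinity>
          \<longleftrightarrow> op_wot_tendsto_zero (\<lambda>n. op_closure (ad (bop (T n)) (op_closure A))))
       \<and> (op_wot_tendsto_zero (\<lambda>n. op_closure (ad (bop (T n)) (op_closure A)))
          \<longleftrightarrow> op_wot_tendsto_zero (\<lambda>n. op_closure (ad (op_adjoint (bop (T n))) (op_adjoint A))))"
proof -
  define B C where "B n = ad (bop (T n)) (op_closure A)"
    and "C n = ad (op_adjoint (bop (T n))) (op_adjoint A)" for n
  define GB GC where "GB n = app (op_closure (B n))" and "GC n = app (op_closure (C n))" for n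
  have dense_adj: "densely_defined (op_adjoint A)"
    using assms(1,2) by (rule densely_defined_op_adjoint)
  \<comment> \<open>\<open>A\<^sub>0\<close> enters only through \<open>D(cl A\<^sub>0) \<subseteq> D(A\<^sup>*)\<close>\<close>
  have "app (op_adjoint (bop (T n))) ` op_dom (op_adjoint A) \<subseteq> op_dom (op_adjoint A)" for n
    using f2 op_dom_closure_subset_adjoint[OF assms(3,5)] by blast
  note closures = commutator_closures[OF assms(3) dense_adj assms(6) this f1[THEN conjunct1]
      f1[THEN conjunct2], folded B_def C_def, folded GB_def GC_def]
  have "(SUP n. op_norm (B n)) < \<infinity> \<longleftrightarrow> uniformly_bounded GB"
    using f1 closures(3,6)
    by (intro SUP_op_norm_less_infinity_iff) (auto simp: B_def intro: bounded_clinear_imp_bounded_linear)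
  moreover have "(SUP n. op_norm (op_closure (C n))) < \<infinity> \<longleftrightarrow> uniformly_bounded GC"
    using closures(2,4) by (intro SUP_op_norm_less_infinity_iff)
      (auto simp: densely_defined_def GC_def intro: bounded_clinear_imp_bounded_linear)
  moreover have "uniformly_bounded GC \<longleftrightarrow> wot_tendsto GC (\<lambda>_. 0)"
    using densely_defined_op_closure[OF assms(3)] dense_adj closures(4)
      wot_tendsto_id_cinner_commutator[OF assms(3) dense_adj \<open>wot_tendsto T id\<close> closures(7)]
    by (intro uniformly_bounded_iff_wot_tendsto_zero[where D = "op_dom (op_closure A)"
          and E = "op_dom (op_adjoint A)"])
      (auto simp: densely_defined_def intro: bounded_clinear_imp_bounded_linear)
  moreover have "op_wot_tendsto_zero (\<lambda>n. op_closure (B n)) \<longleftrightarrow> wot_tendsto GB (\<lambda>_. 0)"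
    and "op_wot_tendsto_zero (\<lambda>n. op_closure (C n)) \<longleftrightarrow> wot_tendsto GC (\<lambda>_. 0)"
    using closures(1-4) by (simp_all add: op_wot_tendsto_zero_def GB_def[abs_def] GC_def[abs_def])
  moreover have "uniformly_bounded GB \<longleftrightarrow> uniformly_bounded GC"
    using closures(5) by (rule uniformly_bounded_iff_skew_adjoint)
  moreover have "wot_tendsto GB (\<lambda>_. 0) \<longleftrightarrow> wot_tendsto GC (\<lambda>_. 0)"
    using closures(5) by (rule wot_tendsto_zero_iff_skew_adjoint)
  ultimately show ?thesis
    unfolding B_def C_def by blast
qed

end
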